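(* Let $(\mathcal{A},\varphi)$ be a tracial noncommutative probability space with universal enveloping traffic space $(\mathcal{G}(\mathcal{A}),\psi)$. For any graph monomial $t\in\mathcal{G}(\mathcal{A})$ there exists a partition $\pi$ of its vertex set such that the quotient $t^\pi$ is a quasi-cactus and $t^\pi\equiv t\pmod\psi$.
   Context: $(\mathcal{A},\varphi)$: unital complex algebra with unital tracial linear functional; free cumulants $\kappa_n$ determined by $\varphi(a_1\cdots a_n)=\sum_{\pi\in NC(n)}\prod_{B\in\pi}\kappa_{|B|}[(a_i)_{i\in B}]$. A graph monomial in $\mathcal{A}$ is a finite connected directed multigraph (loops, parallel edges allowed) with distinguished, not necessarily distinct, vertices $v_{\mathrm{in}},v_{\mathrm{out}}$ and edge labels in $\mathcal{A}$, up to isomorphism; $t^\pi$ identifies vertices in each block of $\pi$ (input/output become their images). $\iota(a)$: two vertices, one edge from $v_{\mathrm{in}}$ to $v_{\mathrm{out}}$ labelled $a$. Substitution $Z_g(t_1,\dots,t_K)$ for a connected bi-rooted multidigraph $g$ with ordered edges $e_1,\dots,e_K$ replaces each $e_i$ by a copy of $t_i$, identifying $\mathrm{src}(e_i)$ with the input and $\mathrm{tgt}(e_i)$ with the output of $t_i$; the product $t_1t_2$ identifies the input of $t_1$ with the output of $t_2$. $\mathcal{G}(\mathcal{A})$ is the span of graph monomials modulo the span of $Z_g(\iota(a_1),\dots,\iota(a_K))-Z_g(P(\iota(b_1),\dots,\iota(b_n)),\iota(a_2),\dots)$ (any edge position) for $a_1=P(b_1,\dots,b_n)$, $P$ a noncommutative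 polynomial. A test graph is a finite connected directed multigraph with labels in $\mathcal{A}$. Cactus: connected multigraph with each edge in exactly one simple cycle (loops, pairs of parallel edges count); pads = these cycles; oriented cactus: every pad directed. $\tau^0_\varphi[T]=\prod_{C\in\mathrm{Pads}(T)}\kappa_{n_C}[\gamma(e_1),\dots,\gamma(e_{n_C})]$ for oriented cacti (edges listed with $\mathrm{src}(e_i)=\mathrm{tgt}(e_{i+1})$, indices mod $n_C$), else $0$; $\tau_\varphi[T]=\sum_\pi\tau^0_\varphi[T^\pi]$ over partitions of the vertex set. $\psi(t)=\tau_\varphi[\tilde\Delta(t)]$ where $\tilde\Delta(t)$ identifies input and output and forgets roots. $s\equiv t\pmod\psi$ means $\psi((s-t)u)=0$ for all $u$. A quasi-cactus is a multigraph in which $\lambda(v,w)\in\{1,2\}$ for all distinct vertices $v,w$, where $\lambda(v,w)$ is the minimal number of edges whose deletion disconnects $v$ and $w$ (equivalently every edge belongs to at most one simple cycle). *)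

theory Defs
  imports Complex_Main "HOL-Library.Disjoint_Sets"
begin

definition complex_algebra :: "(complex \<Rightarrow> 'a::ring_1 \<Rightarrow> 'a) \<Rightarrow> bool" where
  "complex_algebra sc \<longleftrightarrow>
     (\<forall>c d a. sc (c + d) a = sc c a + sc d a) \<and>
     (\<forall>c a b. sc c (a + b) = sc c a + sc c b) \<and>
     (\<forall>c d a. sc (c * d) a = sc c (sc d a)) \<and>
     (\<forall>a. sc 1 a = a) \<and>
     (\<forall>c a b. sc c (a * b) = sc c a * b) \<and>
     (\<forall>c a b. sc c (a * b) = a * sc c b)"

definition tracial_state :: "(complex \<Rightarrow> 'a::ring_1 \<Rightarrow> 'a) \<Rightarrow> ('a \<Rightarrow> complex) \<Rightarrow> bool" where
  "tracial_state sc \<phi> \<longleftrightarrow>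
     (\<forall>a b. \<phi> (a + b) = \<phi> a + \<phi> b) \<and>
     (\<forall>c a. \<phi> (sc c a) = c * \<phi> a) \<and>
     \<phi> 1 = 1 \<and>
     (\<forall>a b. \<phi> (a * b) = \<phi> (b * a))"

definition noncrossing :: "nat set set \<Rightarrow> bool" where
  "noncrossing P \<longleftrightarrow> (\<forall>B1\<in>P. \<forall>B2\<in>P. B1 \<noteq> B2 \<longrightarrow>
     \<not> (\<exists>a b c d. a < b \<and> b < c \<and> c < d \<and> a \<in> B1 \<and> c \<in> B1 \<and> b \<in> B2 \<and> d \<in> B2))"

definition NC :: "nat \<Rightarrow> nat set set set" where
  "NC n = {P. partition_on {0..<n} P \<and> noncrossing P}"

definition free_cumulants :: "('a::ring_1 \<Rightarrow> complex) \<Rightarrow> ('a list \<Rightarrow> complex) \<Rightarrow> bool" where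
  "free_cumulants \<phi> \<kappa> \<longleftrightarrow> (\<forall>as. as \<noteq> [] \<longrightarrow>
     \<phi> (prod_list as) =
       (\<Sum>P\<in>NC (length as). \<Prod>B\<in>P. \<kappa> (map (\<lambda>i. as ! i) (sorted_list_of_set B))))"

section \<open>Test graphs and graph monomials (concrete representatives, vertices and edges are naturals)\<close>

record 'a tgraph =
  tverts :: "nat set"
  tedges :: "nat set"
  tsrc :: "nat \<Rightarrow> nat"
  ttgt :: "nat \<Rightarrow> nat"
  tlab :: "nat \<Rightarrow> 'a"

record 'a gmon = "'a tgraph" +
  gin :: nat
  gout :: nat

definition adj :: "('a, 'b) tgraph_scheme \<Rightarrow> nat set \<Rightarrow> nat \<Rightarrow> nat \<Rightarrow> bool" where
  "adj G F v w \<longleftrightarrow> (\<exists>e \<in> tedges G - F.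
     (tsrc G e = v \<and> ttgt G e = w) \<or> (tsrc G e = w \<and> ttgt G e = v))"

definition tg_connected :: "('a, 'b) tgraph_scheme \<Rightarrow> bool" where
  "tg_connected G \<longleftrightarrow> tverts G \<noteq> {} \<and>
     (\<forall>v\<in>tverts G. \<forall>w\<in>tverts G. (adj G {})\<^sup>*\<^sup>* v w)"

definition tg_wf :: "('a, 'b) tgraph_scheme \<Rightarrow> bool" where
  "tg_wf G \<longleftrightarrow> finite (tverts G) \<and> finite (tedges G) \<and>
     (\<forall>e\<in>tedges G. tsrc G e \<in> tverts G \<and> ttgt G e \<in> tverts G) \<and> tg_connected G"

definition gm_wf :: "('a, 'b) gmon_scheme \<Rightarrow> bool" where
  "gm_wf t \<longleftrightarrow> tg_wf t \<and> gin t \<in> tverts t \<and> gout t \<in> tverts t"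

definition ucycle :: "('a, 'b) tgraph_scheme \<Rightarrow> nat list \<Rightarrow> nat list \<Rightarrow> bool" where
  "ucycle G es vs \<longleftrightarrow> es \<noteq> [] \<and> length vs = length es \<and> distinct es \<and> distinct vs \<and>
     set es \<subseteq> tedges G \<and> set vs \<subseteq> tverts G \<and>
     (\<forall>i<length es. {tsrc G (es ! i), ttgt G (es ! i)} = {vs ! i, vs ! (Suc i mod length es)})"

definition pads :: "('a, 'b) tgraph_scheme \<Rightarrow> nat set set" where
  "pads G = {C. \<exists>es vs. ucycle G es vs \<and> set es = C}"

definition is_cactus :: "('a, 'b) tgraph_scheme \<Rightarrow> bool" where
  "is_cactus G \<longleftrightarrow> tg_connected G \<and> (\<forall>e\<in>tedges G. \<exists>!C. C \<in> pads G \<and> e \<in> C)"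

definition dlisting :: "('a, 'b) tgraph_scheme \<Rightarrow> nat set \<Rightarrow> nat list \<Rightarrow> bool" where
  "dlisting G C es \<longleftrightarrow> distinct es \<and> set es = C \<and>
     (\<forall>i<length es. tsrc G (es ! i) = ttgt G (es ! (Suc i mod length es)))"

definition oriented_cactus :: "('a, 'b) tgraph_scheme \<Rightarrow> bool" where
  "oriented_cactus G \<longleftrightarrow> is_cactus G \<and> (\<forall>C\<in>pads G. \<exists>es. dlisting G C es)"

definition tau0 :: "('a list \<Rightarrow> complex) \<Rightarrow> ('a, 'b) tgraph_scheme \<Rightarrow> complex" where
  "tau0 \<kappa> G = (if oriented_cactus G
      then (\<Prod>C\<in>pads G. \<kappa> (map (tlab G) (SOME es. dlisting G C es)))
      else 0)"

definition qmap :: "nat set set \<Rightarrow> nat \<Rightarrow> nat" where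
  "qmap P v = Min (THE B. B \<in> P \<and> v \<in> B)"

definition vmap :: "(nat \<Rightarrow> nat) \<Rightarrow> ('a, 'b) tgraph_scheme \<Rightarrow> ('a, 'b) tgraph_scheme" where
  "vmap f G = G\<lparr>tverts := f ` tverts G, tsrc := f \<circ> tsrc G, ttgt := f \<circ> ttgt G\<rparr>"

definition quot :: "('a, 'b) tgraph_scheme \<Rightarrow> nat set set \<Rightarrow> ('a, 'b) tgraph_scheme" where
  "quot G P = vmap (qmap P) G"

definition gquot :: "'a gmon \<Rightarrow> nat set set \<Rightarrow> 'a gmon" where
  "gquot t P = (quot t P)\<lparr>gin := qmap P (gin t), gout := qmap P (gout t)\<rparr>"

definition tau :: "('a list \<Rightarrow> complex) \<Rightarrow> ('a, 'b) tgraph_scheme \<Rightarrow> complex" where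
  "tau \<kappa> G = (\<Sum>P\<in>{P. partition_on (tverts G) P}. tau0 \<kappa> (quot G P))"

definition gprod :: "'a gmon \<Rightarrow> 'a gmon \<Rightarrow> 'a gmon" where
  "gprod t1 t2 = (let f = (\<lambda>v. if v = 2 * gout t2 + 1 then 2 * gin t1 else v) in
     \<lparr>tverts = f ` ((\<lambda>v. 2 * v) ` tverts t1 \<union> (\<lambda>v. 2 * v + 1) ` tverts t2),
      tedges = (\<lambda>e. 2 * e) ` tedges t1 \<union> (\<lambda>e. 2 * e + 1) ` tedges t2,
      tsrc = (\<lambda>e. f (if even e then 2 * tsrc t1 (e div 2) else 2 * tsrc t2 (e div 2) + 1)),
      ttgt = (\<lambda>e. f (if even e then 2 * ttgt t1 (e div 2) else 2 * ttgt t2 (e div 2) + 1)),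
      tlab = (\<lambda>e. if even e then tlab t1 (e div 2) else tlab t2 (e div 2)),
      gin = f (2 * gin t2 + 1),
      gout = f (2 * gout t1)\<rparr>)"

definition delta :: "'a gmon \<Rightarrow> 'a tgraph" where
  "delta t = (let f = (\<lambda>v. if v = gout t then gin t else v) in
     \<lparr>tverts = f ` tverts t, tedges = tedges t, tsrc = f \<circ> tsrc t, ttgt = f \<circ> ttgt t,
      tlab = tlab t\<rparr>)"

definition psi :: "('a list \<Rightarrow> complex) \<Rightarrow> 'a gmon \<Rightarrow> complex" where
  "psi \<kappa> t = tau \<kappa> (delta t)"

text \<open>s == t (mod psi): psi((s - t) u) = 0 for all u; by (bi)linearity and since G(A) is
  spanned by graph monomials this is psi(s u) = psi(t u) for all graph monomials u.\<close>
definition cong_psi :: "('a list \<Rightarrow> complex) \<Rightarrow> 'a gmon \<Rightarrow> 'a gmon \<Rightarrow> bool" where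
  "cong_psi \<kappa> s t \<longleftrightarrow> (\<forall>u::'a gmon. gm_wf u \<longrightarrow> psi \<kappa> (gprod s u) = psi \<kappa> (gprod t u))"

definition lam :: "('a, 'b) tgraph_scheme \<Rightarrow> nat \<Rightarrow> nat \<Rightarrow> nat" where
  "lam G v w = Min {card F | F. F \<subseteq> tedges G \<and> \<not> (adj G F)\<^sup>*\<^sup>* v w}"

definition quasi_cactus :: "('a, 'b) tgraph_scheme \<Rightarrow> bool" where
  "quasi_cactus G \<longleftrightarrow> (\<forall>v\<in>tverts G. \<forall>w\<in>tverts G. v \<noteq> w \<longrightarrow> lam G v w \<in> {1, 2})"

end

theory Submission
  imports Defs
begin

text \<open>
  Call a partition Q of the vertices of t separating if any two distinct vertices of the
  quotient t^Q can be disconnected by deleting at most two edges, and let \<pi> be the meet of all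
  separating partitions. A cut between two vertices of t^Q pulls back along the edge-bijective
  map t^\<pi> \<rightarrow> t^Q, so \<pi> is itself separating; together with connectedness this makes t^\<pi> a
  quasi-cactus.

  For a test monomial u, \<psi>(t u) = \<tau>[\<Delta>(t u)] is a sum of \<tau>0 over the quotients by R of the
  disjoint union of t and u, where R ranges over the partitions compatible with the gluing that
  forms \<Delta>(t u). Only quotients that are cacti contribute, and in a cactus any two distinct
  vertices are separated by the (at most two) edges at one of them of a suitable pad. Hence the
  restriction of a contributing R to t is separating, so R is coarser than \<pi>; the terms for
  \<psi>(t^\<pi> u) are exactly these. Nothing about \<phi> or the free cumulants is used.
\<close>

lemma qmap_eq_Min:
  assumes "partition_on A P" "B \<in> P" "x \<in> B"
  shows "qmap P x = Min B"
proof -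
  have "(THE B. B \<in> P \<and> x \<in> B) = B"
    using assms partition_onD2[OF assms(1)] by (auto simp: disjoint_def disjnt_def intro!: the_equality)
  then show ?thesis by (simp add: qmap_def)
qed

lemma qmap_in_block:
  assumes "partition_on A P" "finite A" "B \<in> P" "x \<in> B"
  shows "qmap P x \<in> B"
proof -
  have "finite B" "B \<noteq> {}"
    using assms partition_onD1[OF assms(1)] partition_onD3[OF assms(1)] by (auto intro: finite_subset)
  then show ?thesis using qmap_eq_Min[OF assms(1,3,4)] by simp
qed

lemma partition_on_block:
  assumes "partition_on A P" "x \<in> A"
  obtains B where "B \<in> P" "x \<in> B"
  using partition_onD1[OF assms(1)] assms(2) by auto

lemma partition_on_block_eq:
  assumes "partition_on A P" "B \<in> P" "C \<in> P" "x \<in> B" "x \<in> C"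
  shows "B = C"
  using partition_onD2[OF assms(1)] assms by (auto simp: disjoint_def disjnt_def)

lemma qmap_mem:
  assumes "partition_on A P" "finite A" "x \<in> A"
  shows "qmap P x \<in> A"
proof -
  obtain B where "B \<in> P" "x \<in> B" using partition_on_block[OF assms(1,3)] .
  then show ?thesis using qmap_in_block[OF assms(1,2)] partition_onD1[OF assms(1)] by blast
qed

lemma qmap_eq_iff:
  assumes "partition_on A P" "finite A" "x \<in> A" "y \<in> A"
  shows "qmap P x = qmap P y \<longleftrightarrow> (\<exists>B\<in>P. x \<in> B \<and> y \<in> B)"
proof
  obtain B where B: "B \<in> P" "x \<in> B" using partition_on_block[OF assms(1,3)] .
  assume "qmap P x = qmap P y"
  then have "qmap P y \<in> B" using qmap_in_block[OF assms(1,2) B] by simp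
  moreover obtain C where C: "C \<in> P" "y \<in> C" using partition_on_block[OF assms(1,4)] .
  ultimately have "B = C"
    using qmap_in_block[OF assms(1,2) C] partition_on_block_eq[OF assms(1) B(1) C(1)] by blast
  then show "\<exists>B\<in>P. x \<in> B \<and> y \<in> B" using B C by blast
next
  assume "\<exists>B\<in>P. x \<in> B \<and> y \<in> B"
  then show "qmap P x = qmap P y" using qmap_eq_Min[OF assms(1)] by metis
qed

lemma qmap_qmap:
  assumes "partition_on A P" "finite A" "x \<in> A"
  shows "qmap P (qmap P x) = qmap P x"
proof -
  obtain B where "B \<in> P" "x \<in> B" using partition_on_block[OF assms(1,3)] .
  then show ?thesis using qmap_in_block[OF assms(1,2)] qmap_eq_Min[OF assms(1)] by metis
qed

lemma qmap_quotient_eq_iff: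
  assumes "equiv A r" "finite A" "x \<in> A" "y \<in> A"
  shows "qmap (A // r) x = qmap (A // r) y \<longleftrightarrow> (x, y) \<in> r"
proof -
  have "(\<exists>B\<in>A // r. x \<in> B \<and> y \<in> B) \<longleftrightarrow> (x, y) \<in> r"
  proof
    assume "\<exists>B\<in>A // r. x \<in> B \<and> y \<in> B"
    then obtain z where "x \<in> r `` {z}" "y \<in> r `` {z}" by (auto elim: quotientE)
    then show "(x, y) \<in> r"
      using assms(1) by (metis Image_singleton_iff equivE symD transD)
  next
    assume "(x, y) \<in> r"
    then show "\<exists>B\<in>A // r. x \<in> B \<and> y \<in> B"
      using assms(1,3) by (blast intro: quotientI equiv_class_self)
  qed
  then show ?thesis using qmap_eq_iff[OF partition_on_quotient[OF assms(1)] assms(2-4)] by simp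
qed

definition respects_kernel :: "nat set set \<Rightarrow> (nat \<Rightarrow> 'b) \<Rightarrow> nat set \<Rightarrow> bool" where
  "respects_kernel R k V \<longleftrightarrow> (\<forall>a\<in>V. \<forall>b\<in>V. k a = k b \<longrightarrow> qmap R a = qmap R b)"

definition coarser_partitions :: "(nat \<Rightarrow> 'b) \<Rightarrow> nat set \<Rightarrow> nat set set set" where
  "coarser_partitions k V = {R. partition_on V R \<and> respects_kernel R k V}"

definition pull_partition :: "(nat \<Rightarrow> nat) \<Rightarrow> nat set \<Rightarrow> nat set set \<Rightarrow> nat set set" where
  "pull_partition g A R = (\<lambda>B. {x \<in> A. g x \<in> B}) ` R - {{}}"

lemma partition_on_pull:
  assumes "partition_on V R" "g ` A \<subseteq> V"
  shows "partition_on A (pull_partition g A R)"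
proof -
  have "partition_on {x \<in> A. g x \<in> V} (pull_partition g A R)"
    unfolding pull_partition_def
    by (rule partition_on_transform[OF assms(1)]) (auto simp: disjnt_def)
  moreover have "{x \<in> A. g x \<in> V} = A" using assms(2) by auto
  ultimately show ?thesis by simp
qed

lemma qmap_pull_eq_iff:
  assumes "partition_on V R" "g ` A \<subseteq> V" "finite A" "finite V" "x \<in> A" "y \<in> A"
  shows "qmap (pull_partition g A R) x = qmap (pull_partition g A R) y \<longleftrightarrow> qmap R (g x) = qmap R (g y)"
proof -
  have "(\<exists>C\<in>pull_partition g A R. x \<in> C \<and> y \<in> C) \<longleftrightarrow> (\<exists>B\<in>R. g x \<in> B \<and> g y \<in> B)"
  proof
    assume "\<exists>B\<in>R. g x \<in> B \<and> g y \<in> B"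
    then obtain B where "B \<in> R" "g x \<in> B" "g y \<in> B" by blast
    then show "\<exists>C\<in>pull_partition g A R. x \<in> C \<and> y \<in> C"
      using assms(5,6) unfolding pull_partition_def
      by (intro bexI[of _ "{z \<in> A. g z \<in> B}"]) auto
  qed (auto simp: pull_partition_def)
  moreover have "g x \<in> V" "g y \<in> V" using assms by auto
  ultimately show ?thesis
    using qmap_eq_iff[OF partition_on_pull[OF assms(1,2)] assms(3,5,6)] qmap_eq_iff[OF assms(1,4)]
    by simp
qed

lemma pull_partition_coarser:
  assumes "partition_on (k ` V) R" "finite V"
  shows "pull_partition k V R \<in> coarser_partitions k V"
proof -
  have "respects_kernel (pull_partition k V R) k V"
    unfolding respects_kernel_def using qmap_pull_eq_iff[OF assms(1) _ assms(2)] assms(2) by simp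
  then show ?thesis
    using partition_on_pull[OF assms(1)] by (simp add: coarser_partitions_def)
qed

lemma image_pull_partition:
  assumes "partition_on (k ` V) R"
  shows "(`) k ` pull_partition k V R = R"
proof -
  have sub: "B \<subseteq> k ` V" "B \<noteq> {}" if "B \<in> R" for B
    using partition_onD1[OF assms] partition_onD3[OF assms] that by auto
  then have img: "k ` {x \<in> V. k x \<in> B} = B" if "B \<in> R" for B
    using that by auto
  have "{x \<in> V. k x \<in> B} \<noteq> {}" if "B \<in> R" for B
    using img[OF that] sub(2)[OF that] by auto
  then have "pull_partition k V R = (\<lambda>B. {x \<in> V. k x \<in> B}) ` R"
    unfolding pull_partition_def by auto
  then show ?thesis using img by (simp add: image_image)
qed

lemma partition_on_image_coarser:
  assumes "R \<in> coarser_partitions k V" "finite V"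
  shows "partition_on (k ` V) ((`) k ` R)"
proof -
  have R: "partition_on V R" and ker: "respects_kernel R k V"
    using assms(1) by (auto simp: coarser_partitions_def)
  have V: "V = \<Union>R" using partition_onD1[OF R] .
  show ?thesis
  proof (rule partition_onI)
    show "\<Union>((`) k ` R) = k ` V" unfolding V by blast
    show "{} \<notin> (`) k ` R" using partition_onD3[OF R] by blast
    fix p q assume "p \<in> (`) k ` R" "q \<in> (`) k ` R" "p \<noteq> q"
    then obtain B C where BC: "B \<in> R" "C \<in> R" "p = k ` B" "q = k ` C" "B \<noteq> C" by blast
    show "disjnt p q"
    proof (rule ccontr)
      assume "\<not> disjnt p q"
      then obtain a b where ab: "a \<in> B" "b \<in> C" "k a = k b" using BC by (auto simp: disjnt_def)
      have "a \<in> V" "b \<in> V" using ab BC unfolding V by blast+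
      then have "qmap R a = qmap R b" using ker ab(3) unfolding respects_kernel_def by blast
      then obtain D where "D \<in> R" "a \<in> D" "b \<in> D"
        using qmap_eq_iff[OF R assms(2) \<open>a \<in> V\<close> \<open>b \<in> V\<close>] by blast
      then show False
        using partition_on_block_eq[OF R] ab BC by metis
    qed
  qed
qed

lemma pull_partition_image:
  assumes "R \<in> coarser_partitions k V" "finite V"
  shows "pull_partition k V ((`) k ` R) = R"
proof -
  have R: "partition_on V R" and ker: "respects_kernel R k V"
    using assms(1) by (auto simp: coarser_partitions_def)
  have V: "V = \<Union>R" using partition_onD1[OF R] .
  have pull: "{x \<in> V. k x \<in> k ` B} = B" if B: "B \<in> R" for B
  proof
    show "B \<subseteq> {x \<in> V. k x \<in> k ` B}" using B unfolding V by blast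
    show "{x \<in> V. k x \<in> k ` B} \<subseteq> B"
    proof
      fix x assume "x \<in> {x \<in> V. k x \<in> k ` B}"
      then obtain b where xb: "x \<in> V" "b \<in> B" "k x = k b" by blast
      have "b \<in> V" using xb(2) B unfolding V by blast
      then have "qmap R x = qmap R b"
        using ker xb(1,3) unfolding respects_kernel_def by blast
      then obtain D where "D \<in> R" "x \<in> D" "b \<in> D"
        using qmap_eq_iff[OF R assms(2) xb(1) \<open>b \<in> V\<close>] by blast
      then show "x \<in> B" using partition_on_block_eq[OF R _ B] xb(2) by blast
    qed
  qed
  have "pull_partition k V ((`) k ` R) = (\<lambda>B. {x \<in> V. k x \<in> k ` B}) ` R - {{}}"
    unfolding pull_partition_def by (simp add: image_image)
  also have "\<dots> = R" using pull partition_onD3[OF R] by auto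
  finally show ?thesis .
qed

section \<open>Graphs up to relabelling of vertices\<close>

abbreviation ends :: "('a, 'b) tgraph_scheme \<Rightarrow> nat \<Rightarrow> nat set" where
  "ends G e \<equiv> {tsrc G e, ttgt G e}"

definition ends_in_verts :: "('a, 'b) tgraph_scheme \<Rightarrow> bool" where
  "ends_in_verts G \<longleftrightarrow> (\<forall>e\<in>tedges G. tsrc G e \<in> tverts G \<and> ttgt G e \<in> tverts G)"

lemma adj_iff_ends: "adj G F a b \<longleftrightarrow> (\<exists>e\<in>tedges G - F. ends G e = {a, b})"
  unfolding adj_def by (auto simp: doubleton_eq_iff)

lemma adj_sym: "adj G F a b \<longleftrightarrow> adj G F b a"
  unfolding adj_def by auto

lemma reach_sym:
  assumes "(adj G F)\<^sup>*\<^sup>* a b"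
  shows "(adj G F)\<^sup>*\<^sup>* b a"
  using assms
proof (induction rule: rtranclp_induct)
  case (step y z)
  then show ?case by (meson adj_sym converse_rtranclp_into_rtranclp)
qed simp

lemma reach_hom:
  assumes "(adj H F')\<^sup>*\<^sup>* a b"
    and "\<And>e. e \<in> tedges H - F' \<Longrightarrow>
      \<eta> e \<in> tedges K - F \<and> tsrc K (\<eta> e) = \<rho> (tsrc H e) \<and> ttgt K (\<eta> e) = \<rho> (ttgt H e)"
  shows "(adj K F)\<^sup>*\<^sup>* (\<rho> a) (\<rho> b)"
  using assms(1)
proof (induction rule: rtranclp_induct)
  case (step y z)
  then obtain e where e: "e \<in> tedges H - F'" "ends H e = {y, z}"
    by (auto simp: adj_iff_ends)
  have "ends K (\<eta> e) = \<rho> ` ends H e" using assms(2)[OF e(1)] by auto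
  then have "ends K (\<eta> e) = {\<rho> y, \<rho> z}" using e(2) by simp
  then have "adj K F (\<rho> y) (\<rho> z)"
    using assms(2)[OF e(1)] unfolding adj_iff_ends by blast
  then show ?case using step.IH by simp
qed simp

lemma reach_mono:
  assumes "(adj G F)\<^sup>*\<^sup>* a b" "F' \<subseteq> F"
  shows "(adj G F')\<^sup>*\<^sup>* a b"
  using reach_hom[where \<eta> = id and \<rho> = id, OF assms(1)] assms(2) by auto

lemma Suc_mod_less: "(j::nat) < n \<Longrightarrow> Suc j mod n < n"
  by (meson le_less_trans mod_less_divisor zero_le)

lemma pads_subset_edges: "C \<in> pads G \<Longrightarrow> C \<subseteq> tedges G"
  unfolding pads_def ucycle_def by auto

locale vertex_relabelling =
  fixes H :: "('a, 'b) tgraph_scheme" and K :: "('a, 'c) tgraph_scheme" and g :: "nat \<Rightarrow> nat"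
  assumes edges: "tedges K = tedges H"
    and verts: "tverts K = g ` tverts H"
    and inj: "inj_on g (tverts H)"
    and ends_in: "ends_in_verts H"
    and src: "\<And>e. e \<in> tedges H \<Longrightarrow> tsrc K e = g (tsrc H e)"
    and tgt: "\<And>e. e \<in> tedges H \<Longrightarrow> ttgt K e = g (ttgt H e)"
    and lab: "\<And>e. e \<in> tedges H \<Longrightarrow> tlab K e = tlab H e"
begin

lemma inverse: "vertex_relabelling K H (inv_into (tverts H) g)"
proof
  let ?h = "inv_into (tverts H) g"
  have ends: "tsrc H e \<in> tverts H" "ttgt H e \<in> tverts H" if "e \<in> tedges H" for e
    using ends_in that by (auto simp: ends_in_verts_def)
  show "tverts H = ?h ` tverts K" using inj by (simp add: verts)
  show "inj_on ?h (tverts K)" by (simp add: verts inj_on_inv_into)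
  show "ends_in_verts K" using ends by (auto simp: ends_in_verts_def edges verts src tgt)
  fix e assume "e \<in> tedges K"
  then show "tsrc H e = ?h (tsrc K e)" "ttgt H e = ?h (ttgt K e)" "tlab H e = tlab K e"
    using ends inj by (simp_all add: edges src tgt lab)
qed (simp add: edges)

lemma connected: "tg_connected H \<Longrightarrow> tg_connected K"
  unfolding tg_connected_def verts
  using reach_hom[where \<eta> = id and \<rho> = g and H = H and K = K and F = "{}" and F' = "{}"]
  by (auto simp: edges src tgt)

lemma ucycle: "ucycle H es vs \<Longrightarrow> ucycle K es (map g vs)"
proof -
  assume u: "ucycle H es vs"
  have "ends K (es ! i) = {map g vs ! i, map g vs ! (Suc i mod length es)}" if i: "i < length es" for i
  proof -
    have "es ! i \<in> tedges H" using u i by (auto simp: ucycle_def)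
    then have "ends K (es ! i) = g ` ends H (es ! i)" by (simp add: src tgt)
    also have "\<dots> = g ` {vs ! i, vs ! (Suc i mod length es)}" using u i by (simp add: ucycle_def)
    finally show ?thesis using u i by (simp add: ucycle_def)
  qed
  moreover have "inj_on g (set vs)" using u inj by (auto simp: ucycle_def intro: inj_on_subset)
  ultimately show ?thesis
    using u by (auto simp: ucycle_def distinct_map edges verts)
qed

lemma pads: "pads H \<subseteq> pads K"
  unfolding pads_def using ucycle by blast

lemma dlisting:
  assumes "dlisting H C es" "C \<subseteq> tedges H"
  shows "dlisting K C es"
proof -
  have "tsrc K (es ! i) = ttgt K (es ! (Suc i mod length es))" if i: "i < length es" for i
  proof -
    have "Suc i mod length es < length es" using i by (rule Suc_mod_less)
    then have "es ! i \<in> tedges H" "es ! (Suc i mod length es) \<in> tedges H"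
      using assms i nth_mem by (auto simp: dlisting_def)
    then show ?thesis using assms i by (simp add: dlisting_def src tgt)
  qed
  then show ?thesis using assms(1) by (simp add: dlisting_def)
qed

lemma pads_eq: "pads K = pads H"
proof -
  interpret inv: vertex_relabelling K H "inv_into (tverts H) g" by (rule inverse)
  show ?thesis using pads inv.pads by blast
qed

lemma tau0_eq: "tau0 \<kappa> K = tau0 \<kappa> H"
proof -
  interpret inv: vertex_relabelling K H "inv_into (tverts H) g" by (rule inverse)
  have dl: "dlisting K C = dlisting H C" if "C \<in> pads H" for C
    using dlisting inv.dlisting pads_subset_edges[OF that] by (auto simp: edges)
  have "is_cactus K \<longleftrightarrow> is_cactus H"
    unfolding is_cactus_def using connected inv.connected by (auto simp: pads_eq edges)
  then have oc: "oriented_cactus K \<longleftrightarrow> oriented_cactus H"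
    unfolding oriented_cactus_def by (simp add: pads_eq dl)
  have "\<kappa> (map (tlab K) (SOME es. dlisting K C es)) = \<kappa> (map (tlab H) (SOME es. dlisting H C es))"
    if C: "C \<in> pads H" and "oriented_cactus H" for C
  proof -
    obtain es where "dlisting H C es" using C \<open>oriented_cactus H\<close> by (auto simp: oriented_cactus_def)
    then have "set (SOME es. dlisting H C es) \<subseteq> tedges H"
      using pads_subset_edges[OF C] by (metis dlisting_def someI)
    then have "map (tlab K) (SOME es. dlisting H C es) = map (tlab H) (SOME es. dlisting H C es)"
      using lab by (auto intro: map_cong)
    then show ?thesis by (simp only: dl[OF C])
  qed
  then show ?thesis unfolding tau0_def using oc by (simp add: pads_eq)
qed

end

lemma vmap_simps [simp]:
  "tverts (vmap f G) = f ` tverts G" "tedges (vmap f G) = tedges G"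
  "tsrc (vmap f G) = f \<circ> tsrc G" "ttgt (vmap f G) = f \<circ> ttgt G" "tlab (vmap f G) = tlab G"
  by (simp_all add: vmap_def)

lemma vmap_vmap: "vmap f (vmap g G) = vmap (f \<circ> g) G"
  unfolding vmap_def by (simp add: image_comp o_assoc)

lemma ends_in_verts_vmap: "ends_in_verts G \<Longrightarrow> ends_in_verts (vmap f G)"
  by (auto simp: ends_in_verts_def)

lemma tau0_vmap_cong:
  assumes D: "ends_in_verts D"
    and ker: "\<And>x y. x \<in> tverts D \<Longrightarrow> y \<in> tverts D \<Longrightarrow> f x = f y \<longleftrightarrow> g x = g y"
  shows "tau0 \<kappa> (vmap f D) = tau0 \<kappa> (vmap g D)"
proof -
  define h where "h y = g (inv_into (tverts D) f y)" for y
  have hf: "h (f x) = g x" if "x \<in> tverts D" for x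
    using ker[OF inv_into_into that] f_inv_into_f that unfolding h_def by (metis imageI)
  have ends: "tsrc D e \<in> tverts D" "ttgt D e \<in> tverts D" if "e \<in> tedges D" for e
    using D that by (auto simp: ends_in_verts_def)
  interpret vertex_relabelling "vmap f D" "vmap g D" h
  proof
    show "tverts (vmap g D) = h ` tverts (vmap f D)" using hf by (simp add: image_image)
    show "inj_on h (tverts (vmap f D))" using hf ker by (auto simp: inj_on_def)
  qed (use D hf ends in \<open>simp_all add: ends_in_verts_vmap\<close>)
  show ?thesis by (rule tau0_eq[symmetric])
qed

lemma tau_vmap:
  assumes fin: "finite (tverts D)" and D: "ends_in_verts D"
  shows "tau \<kappa> (vmap k D) = (\<Sum>R\<in>coarser_partitions k (tverts D). tau0 \<kappa> (quot D R))"
  unfolding tau_def vmap_simps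
proof (rule sum.reindex_bij_witness[where j = "pull_partition k (tverts D)" and i = "\<lambda>R. (`) k ` R"])
  fix R' assume "R' \<in> {P. partition_on (k ` tverts D) P}"
  then have R': "partition_on (k ` tverts D) R'" by simp
  show "(`) k ` pull_partition k (tverts D) R' = R'" by (rule image_pull_partition[OF R'])
  show "pull_partition k (tverts D) R' \<in> coarser_partitions k (tverts D)"
    by (rule pull_partition_coarser[OF R' fin])
  have "tau0 \<kappa> (vmap (qmap (pull_partition k (tverts D) R')) D) = tau0 \<kappa> (vmap (qmap R' \<circ> k) D)"
    using qmap_pull_eq_iff[OF R' _ fin] fin by (intro tau0_vmap_cong[OF D]) simp_all
  then show "tau0 \<kappa> (quot D (pull_partition k (tverts D) R')) = tau0 \<kappa> (quot (vmap k D) R')"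
    by (simp add: quot_def vmap_vmap)
next
  fix R assume R: "R \<in> coarser_partitions k (tverts D)"
  show "pull_partition k (tverts D) ((`) k ` R) = R" by (rule pull_partition_image[OF R fin])
  show "(`) k ` R \<in> {P. partition_on (k ` tverts D) P}"
    using partition_on_image_coarser[OF R fin] by simp
qed

section \<open>Paths, cycles and cacti\<close>

definition upath :: "('a, 'b) tgraph_scheme \<Rightarrow> nat set \<Rightarrow> nat list \<Rightarrow> nat list \<Rightarrow> bool" where
  "upath G F vs es \<longleftrightarrow> length vs = Suc (length es) \<and> distinct vs \<and> distinct es \<and>
     set es \<subseteq> tedges G - F \<and> (\<forall>i<length es. ends G (es ! i) = {vs ! i, vs ! Suc i})"

lemma upath_hd_last:
  assumes "upath G F vs es"
  shows "hd vs = vs ! 0" "last vs = vs ! length es"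
proof -
  have "length vs = Suc (length es)" using assms by (simp add: upath_def)
  then have "vs \<noteq> []" "length vs - 1 = length es" by auto
  then show "hd vs = vs ! 0" "last vs = vs ! length es"
    by (simp_all add: hd_conv_nth last_conv_nth)
qed

lemma upath_take:
  assumes "upath G F vs es" "j < length vs"
  shows "upath G F (take (Suc j) vs) (take j es)"
  using assms unfolding upath_def by (auto dest: in_set_takeD)

lemma upath_ends_subset:
  assumes "upath G F vs es" "e \<in> set es"
  shows "ends G e \<subseteq> set vs"
proof -
  obtain i where "i < length es" "e = es ! i" using assms(2) by (auto simp: in_set_conv_nth)
  then show ?thesis using assms(1) unfolding upath_def by auto
qed

lemma upath_snoc:
  assumes p: "upath G F vs es" and e: "e \<in> tedges G - F" "ends G e = {last vs, z}"
    and z: "z \<notin> set vs"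
  shows "upath G F (vs @ [z]) (es @ [e])"
proof -
  have len: "length vs = Suc (length es)" using p by (simp add: upath_def)
  have "e \<notin> set es" using upath_ends_subset[OF p] e(2) z by blast
  moreover note upath_hd_last[OF p]
  ultimately show ?thesis
    using p e z len unfolding upath_def by (auto simp: nth_append less_Suc_eq)
qed

lemma reach_upath:
  assumes "(adj G F)\<^sup>*\<^sup>* x y" "x \<in> tverts G" "ends_in_verts G"
  shows "\<exists>vs es. upath G F vs es \<and> hd vs = x \<and> last vs = y \<and> set vs \<subseteq> tverts G"
  using assms(1)
proof (induction rule: rtranclp_induct)
  case base
  show ?case using assms(2) by (intro exI[of _ "[x]"] exI[of _ "[]"]) (simp add: upath_def)
next
  case (step y z)
  then obtain vs es where p: "upath G F vs es" "hd vs = x" "last vs = y" "set vs \<subseteq> tverts G"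
    by blast
  obtain e where e: "e \<in> tedges G - F" "ends G e = {y, z}"
    using step.hyps(2) by (auto simp: adj_iff_ends)
  have ne: "vs \<noteq> []" using p(1) by (auto simp: upath_def)
  show ?case
  proof (cases "z \<in> set vs")
    case True
    then obtain j where j: "j < length vs" "vs ! j = z" by (auto simp: in_set_conv_nth)
    have "last (take (Suc j) vs) = z" using j by (simp add: take_Suc_conv_app_nth)
    moreover have "hd (take (Suc j) vs) = x" using p(2) ne by simp
    moreover have "set (take (Suc j) vs) \<subseteq> tverts G" using p(4) by (meson order_trans set_take_subset)
    ultimately show ?thesis using upath_take[OF p(1) j(1)] by blast
  next
    case False
    have "z \<in> tverts G" using assms(3) e by (auto simp: ends_in_verts_def doubleton_eq_iff)
    then show ?thesis
      using upath_snoc[OF p(1) e(1) _ False] e(2) p ne by (intro exI) auto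
  qed
qed

lemma upath_last_edge:
  assumes "upath G F vs es" "es \<noteq> []"
  shows "last vs \<in> ends G (last es)"
proof -
  define m where "m = length es - 1"
  have m: "m < length es" "Suc m = length es" using assms(2) by (simp_all add: m_def)
  then have "ends G (es ! m) = {vs ! m, vs ! length es}" using assms(1) unfolding upath_def by metis
  moreover have "last es = es ! m" using assms(2) by (simp add: last_conv_nth m_def)
  ultimately show ?thesis using upath_hd_last(2)[OF assms(1)] by simp
qed

lemma upath_close_ucycle:
  assumes p: "upath G F vs es" and e: "e \<in> tedges G" "e \<notin> set es" "ends G e = {last vs, hd vs}"
    and V: "set vs \<subseteq> tverts G"
  shows "ucycle G (es @ [e]) vs"
proof -
  have len: "length vs = Suc (length es)" using p by (simp add: upath_def)
  note upath_hd_last[OF p]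
  then have "ends G ((es @ [e]) ! i) = {vs ! i, vs ! (Suc i mod length (es @ [e]))}"
    if "i < length (es @ [e])" for i
    using p e(3) that len unfolding upath_def less_Suc_eq length_append_singleton
    by (auto simp: nth_append)
  then show ?thesis using p e V len by (auto simp: ucycle_def upath_def)
qed

lemma reach_first_edge:
  assumes "(adj G F)\<^sup>*\<^sup>* v w" "v \<noteq> w"
  shows "\<exists>e x. e \<in> tedges G - F \<and> ends G e = {v, x} \<and> x \<noteq> v \<and>
    (adj G (F \<union> {e \<in> tedges G. v \<in> ends G e}))\<^sup>*\<^sup>* x w"
  using assms
proof (induction rule: rtranclp_induct)
  case (step y z)
  obtain e' where e': "e' \<in> tedges G - F" "ends G e' = {y, z}"
    using step.hyps(2) by (auto simp: adj_iff_ends)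
  show ?case
  proof (cases "y = v")
    case True
    then show ?thesis using e' step.prems by blast
  next
    case False
    then obtain e x where ex: "e \<in> tedges G - F" "ends G e = {v, x}" "x \<noteq> v"
      "(adj G (F \<union> {e \<in> tedges G. v \<in> ends G e}))\<^sup>*\<^sup>* x y"
      using step.IH by blast
    have "adj G (F \<union> {e \<in> tedges G. v \<in> ends G e}) y z"
      using e' False step.prems unfolding adj_iff_ends by (intro bexI[of _ e']) auto
    then show ?thesis using ex by (meson rtranclp.rtrancl_into_rtrancl)
  qed
qed simp

lemma ucycle_ends_subset:
  assumes "ucycle G es vs" "e \<in> set es"
  shows "ends G e \<subseteq> set vs"
proof -
  obtain j where j: "j < length es" "e = es ! j" using assms(2) by (auto simp: in_set_conv_nth)
  have "Suc j mod length es < length es" using j(1) by (rule Suc_mod_less)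
  then show ?thesis using assms(1) j unfolding ucycle_def by auto
qed

lemma ucycle_incident_index:
  assumes u: "ucycle G es vs" and jk: "j < length es" "k < length es" and v: "vs ! k \<in> ends G (es ! j)"
  shows "j = k \<or> Suc j mod length es = k"
proof -
  have "vs ! k = vs ! j \<or> vs ! k = vs ! (Suc j mod length es)"
    using u jk v unfolding ucycle_def by auto
  moreover have "Suc j mod length es < length es" using jk(1) by (rule Suc_mod_less)
  ultimately show ?thesis using u jk nth_eq_iff_index_eq[of vs] unfolding ucycle_def by metis
qed

lemma Suc_mod_eq_imp_pred:
  fixes j k n :: nat
  assumes "j < n" "Suc j mod n = k"
  shows "j = (if k = 0 then n - 1 else k - 1)"
proof (cases "Suc j < n")
  case False
  then have "Suc j = n" using assms(1) by simp
  then show ?thesis using assms(2) by auto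
qed (use assms in auto)

lemma ucycle_incident_card:
  assumes u: "ucycle G es vs"
  shows "card {e \<in> set es. v \<in> ends G e} \<le> 2"
proof (cases "v \<in> set vs")
  case False
  then have "{e \<in> set es. v \<in> ends G e} = {}" using ucycle_ends_subset[OF u] by blast
  then show ?thesis by (simp only: card.empty)
next
  case True
  define n where "n = length es"
  have "length vs = n" using u by (simp add: ucycle_def n_def)
  then obtain k where k: "k < n" "v = vs ! k" using True by (auto simp: in_set_conv_nth)
  have "{e \<in> set es. v \<in> ends G e} \<subseteq> {es ! k, es ! (if k = 0 then n - 1 else k - 1)}"
  proof (rule subsetI)
    fix e assume "e \<in> {e \<in> set es. v \<in> ends G e}"
    then obtain j where j: "j < n" "e = es ! j" "vs ! k \<in> ends G (es ! j)"
      using k(2) by (auto simp: in_set_conv_nth n_def)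
    then have "j = k \<or> j = (if k = 0 then n - 1 else k - 1)"
      using ucycle_incident_index[OF u] Suc_mod_eq_imp_pred k(1) unfolding n_def by blast
    then show "e \<in> {es ! k, es ! (if k = 0 then n - 1 else k - 1)}" using j(2) by auto
  qed
  then have "card {e \<in> set es. v \<in> ends G e} \<le> card {es ! k, es ! (if k = 0 then n - 1 else k - 1)}"
    by (rule card_mono[rotated]) simp
  also have "\<dots> \<le> 2" by (simp add: card_insert_if)
  finally show ?thesis .
qed

definition cut_le2 :: "('a, 'b) tgraph_scheme \<Rightarrow> nat \<Rightarrow> nat \<Rightarrow> bool" where
  "cut_le2 G v w \<longleftrightarrow> (\<exists>F \<subseteq> tedges G. finite F \<and> card F \<le> 2 \<and> \<not> (adj G F)\<^sup>*\<^sup>* v w)"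

text \<open>
  Cut the edges at v of the pad C through the first edge e of a path from v to w. If v and w
  stayed connected, a path from the far end of e back to v would close with e into a simple
  cycle through e, hence into C, whose last edge is an uncut edge of C at v.
\<close>

lemma cactus_cut_le2:
  assumes K: "is_cactus K" "ends_in_verts K" and vw: "v \<in> tverts K" "w \<in> tverts K" "v \<noteq> w"
  shows "cut_le2 K v w"
proof -
  have "(adj K {})\<^sup>*\<^sup>* v w" using K(1) vw by (auto simp: is_cactus_def tg_connected_def)
  then obtain e x where e: "e \<in> tedges K" "ends K e = {v, x}" "x \<noteq> v"
    and xw: "(adj K {e \<in> tedges K. v \<in> ends K e})\<^sup>*\<^sup>* x w"
    using reach_first_edge[OF _ vw(3)] by fastforce
  obtain C where C: "C \<in> pads K" "e \<in> C" and C_unique: "\<And>C'. C' \<in> pads K \<Longrightarrow> e \<in> C' \<Longrightarrow> C' = C"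
    using K(1) e(1) unfolding is_cactus_def by metis
  obtain ces cvs where "ucycle K ces cvs" "set ces = C" using C(1) unfolding pads_def by blast
  define F where "F = {e' \<in> C. v \<in> ends K e'}"
  have F: "F \<subseteq> tedges K" "finite F" "card F \<le> 2" "e \<in> F"
    using ucycle_incident_card[OF \<open>ucycle K ces cvs\<close>, of v] \<open>set ces = C\<close>
      pads_subset_edges[OF C(1)] C(2) e(2) unfolding F_def by (auto intro: finite_subset)
  have "\<not> (adj K F)\<^sup>*\<^sup>* v w"
  proof
    assume "(adj K F)\<^sup>*\<^sup>* v w"
    moreover have "(adj K F)\<^sup>*\<^sup>* x w" using reach_mono[OF xw] F(1) unfolding F_def by blast
    ultimately have "(adj K F)\<^sup>*\<^sup>* x v" by (meson reach_sym rtranclp_trans)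
    moreover have "x \<in> tverts K" using K(2) e(1,2) by (auto simp: ends_in_verts_def doubleton_eq_iff)
    ultimately obtain vs es where p: "upath K F vs es" "hd vs = x" "last vs = v" "set vs \<subseteq> tverts K"
      using reach_upath K(2) by blast
    have es_F: "set es \<subseteq> tedges K - F" using p(1) by (simp add: upath_def)
    have "e \<notin> set es" using es_F F(4) by blast
    moreover have "ends K e = {last vs, hd vs}" using e(2) p(2,3) by (simp add: insert_commute)
    ultimately have "ucycle K (es @ [e]) vs" using upath_close_ucycle[OF p(1) e(1) _ _ p(4)] by blast
    then have "set (es @ [e]) \<in> pads K" unfolding pads_def by blast
    then have "set (es @ [e]) = C" using C_unique by simp
    moreover have "es \<noteq> []" using p e(3) by (auto simp: upath_def length_Suc_conv)
    ultimately have "last es \<in> C" "last es \<in> set es" by auto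
    moreover have "v \<in> ends K (last es)" using upath_last_edge[OF p(1) \<open>es \<noteq> []\<close>] p(3) by simp
    ultimately show False using es_F unfolding F_def by blast
  qed
  then show ?thesis unfolding cut_le2_def using F by blast
qed

lemma cut_le2_pullback:
  assumes cut: "cut_le2 K (\<rho> a) (\<rho> b)" and inj: "inj_on \<eta> (tedges H)"
    and hom: "\<And>e. e \<in> tedges H \<Longrightarrow>
      \<eta> e \<in> tedges K \<and> tsrc K (\<eta> e) = \<rho> (tsrc H e) \<and> ttgt K (\<eta> e) = \<rho> (ttgt H e)"
  shows "cut_le2 H a b"
proof -
  obtain F where F: "F \<subseteq> tedges K" "finite F" "card F \<le> 2" "\<not> (adj K F)\<^sup>*\<^sup>* (\<rho> a) (\<rho> b)"
    using cut unfolding cut_le2_def by blast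
  define F' where "F' = {e \<in> tedges H. \<eta> e \<in> F}"
  have inj': "inj_on \<eta> F'" using inj unfolding F'_def by (auto intro: inj_on_subset)
  have sub: "\<eta> ` F' \<subseteq> F" unfolding F'_def by auto
  have "F' \<subseteq> tedges H" unfolding F'_def by blast
  moreover have "finite F'" using finite_imageD[OF finite_subset[OF sub F(2)] inj'] .
  moreover have "card F' \<le> 2" using card_inj_on_le[OF inj' sub F(2)] F(3) by simp
  moreover have "\<not> (adj H F')\<^sup>*\<^sup>* a b"
  proof
    assume "(adj H F')\<^sup>*\<^sup>* a b"
    then have "(adj K F)\<^sup>*\<^sup>* (\<rho> a) (\<rho> b)"
      by (rule reach_hom) (use hom in \<open>auto simp: F'_def\<close>)
    then show False using F(4) by simp
  qed
  ultimately show ?thesis unfolding cut_le2_def by blast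
qed

definition two_edge_separable :: "('a, 'b) tgraph_scheme \<Rightarrow> bool" where
  "two_edge_separable G \<longleftrightarrow> (\<forall>v\<in>tverts G. \<forall>w\<in>tverts G. v \<noteq> w \<longrightarrow> cut_le2 G v w)"

lemma cactus_two_edge_separable:
  "is_cactus K \<Longrightarrow> ends_in_verts K \<Longrightarrow> two_edge_separable K"
  unfolding two_edge_separable_def using cactus_cut_le2 by blast

lemma lam_in_1_2:
  assumes fin: "finite (tedges G)" and r: "(adj G {})\<^sup>*\<^sup>* a b" and c: "cut_le2 G a b"
  shows "lam G a b \<in> {1, 2}"
proof -
  define S where "S = {card F | F. F \<subseteq> tedges G \<and> \<not> (adj G F)\<^sup>*\<^sup>* a b}"
  have "S \<subseteq> {0..card (tedges G)}" unfolding S_def using card_mono[OF fin] by auto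
  then have fS: "finite S" by (rule finite_subset) simp
  obtain F where F: "F \<subseteq> tedges G" "card F \<le> 2" "\<not> (adj G F)\<^sup>*\<^sup>* a b"
    using c unfolding cut_le2_def by blast
  then have "card F \<in> S" unfolding S_def by blast
  then have "Min S \<le> 2" "S \<noteq> {}" using Min_le[OF fS] F(2) by fastforce+
  moreover have "0 \<notin> S"
  proof
    assume "0 \<in> S"
    then obtain F' where "card F' = 0" "F' \<subseteq> tedges G" "\<not> (adj G F')\<^sup>*\<^sup>* a b"
      unfolding S_def by auto
    moreover then have "F' = {}" using finite_subset[OF _ fin] by (metis card_0_eq)
    ultimately show False using r by simp
  qed
  then have "Min S \<noteq> 0" using Min_in[OF fS \<open>S \<noteq> {}\<close>] by metis
  ultimately show ?thesis unfolding lam_def S_def[symmetric] by auto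
qed

lemma quasi_cactusI:
  assumes "finite (tedges G)" "tg_connected G" "two_edge_separable G"
  shows "quasi_cactus G"
  using assms lam_in_1_2 unfolding quasi_cactus_def two_edge_separable_def tg_connected_def by blast

section \<open>Separating partitions\<close>

lemma quot_simps [simp]:
  "tverts (quot G P) = qmap P ` tverts G" "tedges (quot G P) = tedges G"
  "tsrc (quot G P) = qmap P \<circ> tsrc G" "ttgt (quot G P) = qmap P \<circ> ttgt G"
  "tlab (quot G P) = tlab G"
  by (simp_all add: quot_def)

definition separating_partitions :: "('a, 'b) tgraph_scheme \<Rightarrow> nat set set set" where
  "separating_partitions G = {Q. partition_on (tverts G) Q \<and> two_edge_separable (quot G Q)}"

lemma kernel_partition_separating:
  assumes fin: "finite (tverts G)" and K: "two_edge_separable K" and \<iota>: "\<iota> ` tverts G \<subseteq> tverts K"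
    and inj: "inj_on \<eta> (tedges G)"
    and hom: "\<And>e. e \<in> tedges G \<Longrightarrow>
      \<eta> e \<in> tedges K \<and> tsrc K (\<eta> e) = \<iota> (tsrc G e) \<and> ttgt K (\<eta> e) = \<iota> (ttgt G e)"
    and G: "ends_in_verts G"
  shows "tverts G // {(x, y) \<in> tverts G \<times> tverts G. \<iota> x = \<iota> y} \<in> separating_partitions G"
proof -
  define r where "r = {(x, y) \<in> tverts G \<times> tverts G. \<iota> x = \<iota> y}"
  define Q where "Q = tverts G // r"
  have r: "equiv (tverts G) r" unfolding r_def by (auto intro!: equivI refl_onI symI transI)
  have Q: "partition_on (tverts G) Q" unfolding Q_def by (rule partition_on_quotient[OF r])
  have \<iota>Q: "\<iota> (qmap Q x) = \<iota> x" if "x \<in> tverts G" for x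
  proof -
    have "qmap Q (qmap Q x) = qmap Q x" by (rule qmap_qmap[OF Q fin that])
    then have "(qmap Q x, x) \<in> r"
      unfolding Q_def using qmap_quotient_eq_iff[OF r fin] qmap_mem[OF Q fin that] that
      by (simp add: Q_def)
    then show ?thesis by (simp add: r_def)
  qed
  have "cut_le2 (quot G Q) (qmap Q x) (qmap Q y)"
    if xy: "x \<in> tverts G" "y \<in> tverts G" "qmap Q x \<noteq> qmap Q y" for x y
  proof (rule cut_le2_pullback[where \<rho> = \<iota> and \<eta> = \<eta> and K = K])
    have "\<iota> x \<noteq> \<iota> y" using xy qmap_quotient_eq_iff[OF r fin] unfolding Q_def r_def by auto
    then show "cut_le2 K (\<iota> (qmap Q x)) (\<iota> (qmap Q y))"
      using K \<iota> xy by (simp add: two_edge_separable_def \<iota>Q image_subset_iff)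
    show "inj_on \<eta> (tedges (quot G Q))" using inj by simp
    fix e assume "e \<in> tedges (quot G Q)"
    then show "\<eta> e \<in> tedges K \<and> tsrc K (\<eta> e) = \<iota> (tsrc (quot G Q) e) \<and>
        ttgt K (\<eta> e) = \<iota> (ttgt (quot G Q) e)"
      using hom G \<iota>Q by (simp add: ends_in_verts_def)
  qed
  then have "two_edge_separable (quot G Q)" unfolding two_edge_separable_def by auto
  then show ?thesis using Q by (simp add: separating_partitions_def Q_def r_def)
qed

definition finest_separating_partition :: "('a, 'b) tgraph_scheme \<Rightarrow> nat set set" where
  "finest_separating_partition G = tverts G //
     {(x, y) \<in> tverts G \<times> tverts G. \<forall>Q\<in>separating_partitions G. qmap Q x = qmap Q y}"

lemma partition_on_finest_separating:
  "partition_on (tverts G) (finest_separating_partition G)"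
  unfolding finest_separating_partition_def
  by (rule partition_on_quotient) (auto intro!: equivI refl_onI symI transI)

lemma qmap_finest_separating_eq_iff:
  assumes "finite (tverts G)" "x \<in> tverts G" "y \<in> tverts G"
  shows "qmap (finest_separating_partition G) x = qmap (finest_separating_partition G) y \<longleftrightarrow>
    (\<forall>Q\<in>separating_partitions G. qmap Q x = qmap Q y)"
  unfolding finest_separating_partition_def
  by (subst qmap_quotient_eq_iff[OF _ assms]) (auto intro!: equivI refl_onI symI transI simp: assms)

lemma finest_separating_partition_separating:
  assumes fin: "finite (tverts G)" and G: "ends_in_verts G"
  shows "two_edge_separable (quot G (finest_separating_partition G))"
  unfolding two_edge_separable_def
proof (intro ballI impI)
  let ?P = "finest_separating_partition G"
  fix a b assume "a \<in> tverts (quot G ?P)" "b \<in> tverts (quot G ?P)" "a \<noteq> b"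
  then obtain x y where xy: "x \<in> tverts G" "y \<in> tverts G" "a = qmap ?P x" "b = qmap ?P y" by auto
  then obtain Q where Q: "Q \<in> separating_partitions G" "qmap Q x \<noteq> qmap Q y"
    using qmap_finest_separating_eq_iff[OF fin] \<open>a \<noteq> b\<close> by blast
  have sep: "two_edge_separable (quot G Q)" using Q(1) by (simp add: separating_partitions_def)
  have QP: "qmap Q (qmap ?P z) = qmap Q z" if "z \<in> tverts G" for z
    using qmap_finest_separating_eq_iff[OF fin qmap_mem[OF partition_on_finest_separating fin that] that]
      qmap_qmap[OF partition_on_finest_separating fin that] Q(1) by blast
  show "cut_le2 (quot G ?P) a b"
  proof (rule cut_le2_pullback[where \<rho> = "qmap Q" and \<eta> = id and K = "quot G Q"])
    show "cut_le2 (quot G Q) (qmap Q a) (qmap Q b)"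
      using sep Q(2) xy QP by (auto simp: two_edge_separable_def)
    fix e assume "e \<in> tedges (quot G ?P)"
    then show "id e \<in> tedges (quot G Q) \<and> tsrc (quot G Q) (id e) = qmap Q (tsrc (quot G ?P) e) \<and>
        ttgt (quot G Q) (id e) = qmap Q (ttgt (quot G ?P) e)"
      using G QP by (simp add: ends_in_verts_def)
  qed simp
qed

lemma gquot_simps [simp]:
  "tverts (gquot t P) = qmap P ` tverts t" "tedges (gquot t P) = tedges t"
  "tsrc (gquot t P) = qmap P \<circ> tsrc t" "ttgt (gquot t P) = qmap P \<circ> ttgt t"
  "tlab (gquot t P) = tlab t" "gin (gquot t P) = qmap P (gin t)" "gout (gquot t P) = qmap P (gout t)"
  by (simp_all add: gquot_def quot_def vmap_def)

lemma adj_gquot: "adj (gquot t P) = adj (quot t P)"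
  by (simp add: adj_def fun_eq_iff)

lemma gm_wf_ends_in_verts: "gm_wf t \<Longrightarrow> ends_in_verts t"
  by (simp add: gm_wf_def tg_wf_def ends_in_verts_def)

lemma quasi_cactus_gquot_finest:
  assumes t: "gm_wf t"
  shows "quasi_cactus (gquot t (finest_separating_partition t))"
proof (rule quasi_cactusI)
  let ?P = "finest_separating_partition t"
  have fin: "finite (tverts t)" "finite (tedges t)" and conn: "tg_connected t"
    using t by (simp_all add: gm_wf_def tg_wf_def)
  show "finite (tedges (gquot t ?P))" using fin by simp
  show "tg_connected (gquot t ?P)"
    using conn reach_hom[where \<eta> = id and \<rho> = "qmap ?P" and H = t and K = "gquot t ?P" and F = "{}" and F' = "{}"]
    by (auto simp: tg_connected_def)
  have "two_edge_separable (quot t ?P)"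
    using finest_separating_partition_separating[OF fin(1) gm_wf_ends_in_verts[OF t]] .
  then show "two_edge_separable (gquot t ?P)"
    by (simp add: two_edge_separable_def cut_le2_def adj_gquot)
qed

section \<open>Products with a test monomial\<close>

text \<open>The product \<open>gprod t u\<close> before its input and output are glued.\<close>

definition dsum :: "'a gmon \<Rightarrow> 'a gmon \<Rightarrow> 'a tgraph" where
  "dsum t u = \<lparr>tverts = (\<lambda>v. 2 * v) ` tverts t \<union> (\<lambda>v. 2 * v + 1) ` tverts u,
      tedges = (\<lambda>e. 2 * e) ` tedges t \<union> (\<lambda>e. 2 * e + 1) ` tedges u,
      tsrc = (\<lambda>e. if even e then 2 * tsrc t (e div 2) else 2 * tsrc u (e div 2) + 1),
      ttgt = (\<lambda>e. if even e then 2 * ttgt t (e div 2) else 2 * ttgt u (e div 2) + 1),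
      tlab = (\<lambda>e. if even e then tlab t (e div 2) else tlab u (e div 2))\<rparr>"

definition merge_pairs :: "nat \<Rightarrow> nat \<Rightarrow> nat \<Rightarrow> nat \<Rightarrow> nat \<Rightarrow> nat" where
  "merge_pairs p1 p2 p3 p4 c = (let f = (\<lambda>v. if v = p1 then p2 else v) in
     if f c = f p3 then f p4 else f c)"

definition left_map :: "(nat \<Rightarrow> nat) \<Rightarrow> nat \<Rightarrow> nat" where
  "left_map f n = (if even n then 2 * f (n div 2) else n)"

lemma gprod_simps:
  fixes t u :: "'a gmon"
  defines "f \<equiv> \<lambda>v. if v = 2 * gout u + 1 then 2 * gin t else v"
  shows "tverts (gprod t u) = f ` tverts (dsum t u)" "tedges (gprod t u) = tedges (dsum t u)"
    "tsrc (gprod t u) = f \<circ> tsrc (dsum t u)" "ttgt (gprod t u) = f \<circ> ttgt (dsum t u)"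
    "tlab (gprod t u) = tlab (dsum t u)"
    "gin (gprod t u) = f (2 * gin u + 1)" "gout (gprod t u) = f (2 * gout t)"
  unfolding gprod_def dsum_def Let_def f_def by (simp_all add: o_def del: if_image_distrib)

lemma delta_gprod:
  "delta (gprod t u) = vmap (merge_pairs (2 * gout u + 1) (2 * gin t) (2 * gout t) (2 * gin u + 1)) (dsum t u)"
proof -
  have "delta (gprod t u) = vmap (\<lambda>v. if v = gout (gprod t u) then gin (gprod t u) else v)
      (vmap (\<lambda>v. if v = 2 * gout u + 1 then 2 * gin t else v) (dsum t u))"
    unfolding delta_def Let_def vmap_def gprod_simps by (simp add: dsum_def)
  moreover have "(\<lambda>v. if v = gout (gprod t u) then gin (gprod t u) else v) \<circ>
      (\<lambda>v. if v = 2 * gout u + 1 then 2 * gin t else v) =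
      merge_pairs (2 * gout u + 1) (2 * gin t) (2 * gout t) (2 * gin u + 1)"
    by (rule ext) (simp only: o_def merge_pairs_def Let_def gprod_simps(6,7))
  ultimately show ?thesis by (simp only: vmap_vmap)
qed

lemma dsum_gquot: "dsum (gquot t P) u = vmap (left_map (qmap P)) (dsum t u)"
  unfolding dsum_def vmap_def left_map_def
  by (simp add: image_comp image_Un o_def fun_eq_iff del: if_image_distrib)

lemma qmap_merge_pairs:
  assumes "qmap R p1 = qmap R p2" "qmap R p3 = qmap R p4"
  shows "qmap R (merge_pairs p1 p2 p3 p4 c) = qmap R c"
proof -
  define f where "f v = (if v = p1 then p2 else v)" for v
  have f: "qmap R (f v) = qmap R v" for v using assms(1) by (simp add: f_def)
  have "merge_pairs p1 p2 p3 p4 c = (if f c = f p3 then f p4 else f c)"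
    by (simp add: merge_pairs_def f_def)
  moreover have "qmap R (f p4) = qmap R (f c)" if "f c = f p3"
    using f[of p4] f[of p3] assms(2) that by metis
  ultimately show ?thesis using f[of c] by auto
qed

lemma respects_merge_pairs_iff:
  assumes "p1 \<in> W" "p2 \<in> W" "p3 \<in> W" "p4 \<in> W"
  shows "respects_kernel R (merge_pairs p1 p2 p3 p4) W \<longleftrightarrow> qmap R p1 = qmap R p2 \<and> qmap R p3 = qmap R p4"
proof
  assume "respects_kernel R (merge_pairs p1 p2 p3 p4) W"
  moreover have "merge_pairs p1 p2 p3 p4 p1 = merge_pairs p1 p2 p3 p4 p2"
    "merge_pairs p1 p2 p3 p4 p3 = merge_pairs p1 p2 p3 p4 p4"
    unfolding merge_pairs_def Let_def by simp_all
  ultimately show "qmap R p1 = qmap R p2 \<and> qmap R p3 = qmap R p4"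
    using assms unfolding respects_kernel_def by blast
next
  assume "qmap R p1 = qmap R p2 \<and> qmap R p3 = qmap R p4"
  then show "respects_kernel R (merge_pairs p1 p2 p3 p4) W"
    unfolding respects_kernel_def by (metis qmap_merge_pairs)
qed

lemma qmap_respects_idem:
  assumes "respects_kernel R q V" "x \<in> V" "q x \<in> V" "q (q x) = q x"
  shows "qmap R (q x) = qmap R x"
  using assms(1)[unfolded respects_kernel_def, rule_format, OF assms(3,2,4)] .

lemma respects_kernel_comp_iff:
  assumes q: "q ` V \<subseteq> V" "\<And>x. x \<in> V \<Longrightarrow> q (q x) = q x"
  shows "respects_kernel R (f \<circ> q) V \<longleftrightarrow> respects_kernel R q V \<and> respects_kernel R f (q ` V)"
proof
  assume fq: "respects_kernel R (f \<circ> q) V"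
  show "respects_kernel R q V \<and> respects_kernel R f (q ` V)"
  proof
    show "respects_kernel R q V"
      unfolding respects_kernel_def
      using fq[unfolded respects_kernel_def, rule_format] by (metis comp_apply)
    show "respects_kernel R f (q ` V)"
      unfolding respects_kernel_def
    proof (intro ballI impI)
      fix a' b' assume "a' \<in> q ` V" "b' \<in> q ` V" "f a' = f b'"
      moreover have "a' \<in> V" "b' \<in> V" "q a' = a'" "q b' = b'"
        using q \<open>a' \<in> q ` V\<close> \<open>b' \<in> q ` V\<close> by auto
      ultimately have "f (q a') = f (q b')" by simp
      then show "qmap R a' = qmap R b'"
        using fq[unfolded respects_kernel_def, rule_format, OF \<open>a' \<in> V\<close> \<open>b' \<in> V\<close>] by simp
    qed
  qed
next
  assume "respects_kernel R q V \<and> respects_kernel R f (q ` V)"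
  then have rq: "respects_kernel R q V" and rf: "respects_kernel R f (q ` V)" by blast+
  show "respects_kernel R (f \<circ> q) V"
    unfolding respects_kernel_def
  proof (intro ballI impI)
    fix a b assume ab: "a \<in> V" "b \<in> V" "(f \<circ> q) a = (f \<circ> q) b"
    then have "qmap R (q a) = qmap R (q b)"
      using rf[unfolded respects_kernel_def, rule_format] ab(1,2) by (simp add: image_eqI)
    moreover have "qmap R (q a) = qmap R a" "qmap R (q b) = qmap R b"
      using qmap_respects_idem[OF rq] q ab(1,2) by blast+
    ultimately show "qmap R a = qmap R b" by simp
  qed
qed

lemma dsum_simps [simp]:
  "tverts (dsum t u) = (\<lambda>v. 2 * v) ` tverts t \<union> (\<lambda>v. 2 * v + 1) ` tverts u"
  "tedges (dsum t u) = (\<lambda>e. 2 * e) ` tedges t \<union> (\<lambda>e. 2 * e + 1) ` tedges u"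
  "tsrc (dsum t u) e = (if even e then 2 * tsrc t (e div 2) else 2 * tsrc u (e div 2) + 1)"
  "ttgt (dsum t u) e = (if even e then 2 * ttgt t (e div 2) else 2 * ttgt u (e div 2) + 1)"
  by (simp_all add: dsum_def)

lemma dsum_verts_iff:
  "n \<in> tverts (dsum t u) \<longleftrightarrow> (even n \<and> n div 2 \<in> tverts t) \<or> (odd n \<and> n div 2 \<in> tverts u)"
proof
  assume "(even n \<and> n div 2 \<in> tverts t) \<or> (odd n \<and> n div 2 \<in> tverts u)"
  then show "n \<in> tverts (dsum t u)"
  proof
    assume "even n \<and> n div 2 \<in> tverts t"
    then have "n \<in> (\<lambda>v. 2 * v) ` tverts t" by (intro rev_image_eqI[of "n div 2"]) auto
    then show ?thesis by simp
  next
    assume "odd n \<and> n div 2 \<in> tverts u"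
    then have "n \<in> (\<lambda>v. 2 * v + 1) ` tverts u" by (intro rev_image_eqI[of "n div 2"]) auto
    then show ?thesis by simp
  qed
qed auto

lemma ends_in_verts_dsum:
  "ends_in_verts t \<Longrightarrow> ends_in_verts u \<Longrightarrow> ends_in_verts (dsum t u)"
  by (auto simp: ends_in_verts_def)

text \<open>
  Restricted to the copy of t, the quotient map of a cactus quotient has a separating kernel.
\<close>

lemma cactus_quotient_respects_left_finest:
  assumes t: "gm_wf t" and u: "gm_wf u"
    and R: "partition_on (tverts (dsum t u)) R" and K: "is_cactus (quot (dsum t u) R)"
  shows "respects_kernel R (left_map (qmap (finest_separating_partition t))) (tverts (dsum t u))"
proof -
  let ?D = "dsum t u" and ?K = "quot (dsum t u) R" and ?P = "finest_separating_partition t"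
  let ?\<iota> = "\<lambda>x. qmap R (2 * x)"
  have fin: "finite (tverts t)" using t by (simp add: gm_wf_def tg_wf_def)
  have D: "ends_in_verts ?D" using ends_in_verts_dsum gm_wf_ends_in_verts t u by blast
  then have sep: "two_edge_separable ?K"
    using cactus_two_edge_separable[OF K] by (simp add: quot_def ends_in_verts_vmap)
  define r where "r = {(x, y) \<in> tverts t \<times> tverts t. ?\<iota> x = ?\<iota> y}"
  have r: "equiv (tverts t) r" unfolding r_def by (auto intro!: equivI refl_onI symI transI)
  have "tverts t // r \<in> separating_partitions t"
    unfolding r_def
    by (rule kernel_partition_separating[OF fin _ _ _ _ gm_wf_ends_in_verts[OF t], where \<eta> = "\<lambda>e. 2 * e"])
      (use sep in \<open>auto simp: inj_on_def\<close>)
  then have refines: "?\<iota> x = ?\<iota> y" if "x \<in> tverts t" "y \<in> tverts t" "qmap ?P x = qmap ?P y" for x y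
    using that qmap_finest_separating_eq_iff[OF fin] qmap_quotient_eq_iff[OF r fin]
    by (auto simp: r_def)
  show ?thesis
    unfolding respects_kernel_def
  proof (intro ballI impI)
    fix a b assume ab: "a \<in> tverts ?D" "b \<in> tverts ?D" "left_map (qmap ?P) a = left_map (qmap ?P) b"
    show "qmap R a = qmap R b"
    proof (cases "even a")
      case True
      then have "even b" "qmap ?P (a div 2) = qmap ?P (b div 2)"
        using ab(3) by (auto simp: left_map_def split: if_splits)
      moreover have "a div 2 \<in> tverts t" "b div 2 \<in> tverts t"
        using ab(1,2) True \<open>even b\<close> dsum_verts_iff[of a t u] dsum_verts_iff[of b t u] by blast+
      ultimately have "qmap R (2 * (a div 2)) = qmap R (2 * (b div 2))" using refines by blast
      then show ?thesis using True \<open>even b\<close> by simp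
    next
      case False
      then show ?thesis using ab(3) by (auto simp: left_map_def split: if_splits)
    qed
  qed
qed

lemma coarser_merge_pairs_comp:
  assumes q: "q ` V \<subseteq> V" "\<And>x. x \<in> V \<Longrightarrow> q (q x) = q x"
    and p: "p1 \<in> V" "p2 \<in> V" "p3 \<in> V" "p4 \<in> V" "q p1 = p1" "q p4 = p4"
  shows "coarser_partitions (merge_pairs p1 (q p2) (q p3) p4 \<circ> q) V =
    {R \<in> coarser_partitions (merge_pairs p1 p2 p3 p4) V. respects_kernel R q V}"
proof -
  have W: "p1 \<in> q ` V" "q p2 \<in> q ` V" "q p3 \<in> q ` V" "p4 \<in> q ` V"
    using p by (metis imageI)+
  have "respects_kernel R (merge_pairs p1 (q p2) (q p3) p4 \<circ> q) V \<longleftrightarrow>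
      respects_kernel R q V \<and> respects_kernel R (merge_pairs p1 p2 p3 p4) V" for R
  proof -
    have idem: "qmap R (q p2) = qmap R p2" "qmap R (q p3) = qmap R p3" if "respects_kernel R q V"
      using qmap_respects_idem[OF that] q p by (simp_all add: image_subset_iff)
    have "respects_kernel R (merge_pairs p1 (q p2) (q p3) p4 \<circ> q) V \<longleftrightarrow>
        respects_kernel R q V \<and> respects_kernel R (merge_pairs p1 (q p2) (q p3) p4) (q ` V)"
      by (rule respects_kernel_comp_iff[OF q])
    also have "\<dots> \<longleftrightarrow> respects_kernel R q V \<and> qmap R p1 = qmap R (q p2) \<and> qmap R (q p3) = qmap R p4"
      by (simp only: respects_merge_pairs_iff[OF W])
    also have "\<dots> \<longleftrightarrow> respects_kernel R q V \<and> respects_kernel R (merge_pairs p1 p2 p3 p4) V"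
      using idem by (auto simp: respects_merge_pairs_iff[OF p(1-4)])
    finally show ?thesis .
  qed
  then show ?thesis by (auto simp: coarser_partitions_def)
qed

lemma psi_gprod_gquot_finest:
  assumes t: "gm_wf t" and u: "gm_wf u"
  shows "psi \<kappa> (gprod (gquot t (finest_separating_partition t)) u) = psi \<kappa> (gprod t u)"
proof -
  define P where "P = finest_separating_partition t"
  define D where "D = dsum t u"
  define q where "q = left_map (qmap P)"
  define p1 p2 p3 p4 where "p1 = 2 * gout u + 1" and "p2 = 2 * gin t" and "p3 = 2 * gout t"
    and "p4 = 2 * gin u + 1"
  have fin_t: "finite (tverts t)" and fin_u: "finite (tverts u)"
    using t u by (simp_all add: gm_wf_def tg_wf_def)
  have fin: "finite (tverts D)" using fin_t fin_u by (simp add: D_def)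
  have D: "ends_in_verts D" unfolding D_def using ends_in_verts_dsum gm_wf_ends_in_verts t u by blast
  have P: "partition_on (tverts t) P" unfolding P_def by (rule partition_on_finest_separating)
  have q: "q ` tverts D \<subseteq> tverts D" "\<And>x. x \<in> tverts D \<Longrightarrow> q (q x) = q x"
    using qmap_mem[OF P fin_t] qmap_qmap[OF P fin_t]
    by (auto simp: q_def left_map_def D_def dsum_verts_iff)
  have p: "p1 \<in> tverts D" "p2 \<in> tverts D" "p3 \<in> tverts D" "p4 \<in> tverts D" "q p1 = p1" "q p4 = p4"
    using t u by (auto simp: p1_def p2_def p3_def p4_def D_def gm_wf_def q_def left_map_def)
  let ?C = "coarser_partitions (merge_pairs p1 p2 p3 p4) (tverts D)"
  have vanish: "tau0 \<kappa> (quot D R) = 0" if "R \<in> ?C" "\<not> respects_kernel R q (tverts D)" for R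
    using cactus_quotient_respects_left_finest[OF t u, of R] that
    by (auto simp: tau0_def oriented_cactus_def coarser_partitions_def q_def P_def D_def)
  have "finite ?C"
    using finitely_many_partition_on[OF fin] by (rule finite_subset[rotated]) (auto simp: coarser_partitions_def)
  have "psi \<kappa> (gprod (gquot t P) u) = tau \<kappa> (vmap (merge_pairs p1 (q p2) (q p3) p4 \<circ> q) D)"
    unfolding psi_def delta_gprod dsum_gquot vmap_vmap
    by (simp add: q_def left_map_def p1_def p2_def p3_def p4_def D_def)
  also have "\<dots> = (\<Sum>R\<in>{R \<in> ?C. respects_kernel R q (tverts D)}. tau0 \<kappa> (quot D R))"
    unfolding tau_vmap[OF fin D] using coarser_merge_pairs_comp[OF q p] by simp
  also have "\<dots> = (\<Sum>R\<in>?C. tau0 \<kappa> (quot D R))"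
    by (rule sum.mono_neutral_left) (use \<open>finite ?C\<close> vanish in auto)
  also have "\<dots> = tau \<kappa> (vmap (merge_pairs p1 p2 p3 p4) D)"
    by (rule tau_vmap[OF fin D, symmetric])
  also have "\<dots> = psi \<kappa> (gprod t u)"
    by (simp add: psi_def delta_gprod p1_def p2_def p3_def p4_def D_def)
  finally show ?thesis unfolding P_def .
qed

theorem corollary2p9:
  fixes sc :: "complex \<Rightarrow> 'a::ring_1 \<Rightarrow> 'a"
    and \<phi> :: "'a \<Rightarrow> complex"
    and \<kappa> :: "'a list \<Rightarrow> complex"
    and t :: "'a gmon"
  assumes "complex_algebra sc"
    and "tracial_state sc \<phi>"
    and "free_cumulants \<phi> \<kappa>"
    and "gm_wf t"
  shows "\<exists>P. partition_on (tverts t) P \<and> quasi_cactus (gquot t P) \<and> cong_psi \<kappa> (gquot t P) t"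
proof (intro exI conjI)
  show "partition_on (tverts t) (finest_separating_partition t)"
    by (rule partition_on_finest_separating)
  show "quasi_cactus (gquot t (finest_separating_partition t))"
    by (rule quasi_cactus_gquot_finest[OF assms(4)])
  show "cong_psi \<kappa> (gquot t (finest_separating_partition t)) t"
    unfolding cong_psi_def using psi_gprod_gquot_finest[OF assms(4)] by blast
qed

end
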